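(* Finite pseudo-orthomodular posets are precisely the complement-closed and doubly dense subsets of finite orthomodular lattices. That is: (a) every finite pseudo-orthomodular poset is isomorphic (as a poset with complementation) to a complement-closed and doubly dense subset of some finite orthomodular lattice, with the induced order and complementation; and (b) if $X$ is a complement-closed and doubly dense subset of a finite orthomodular lattice, then $X$ with the induced order and complementation is a (finite) pseudo-orthomodular poset.
   Context: For a poset and $M$ a subset, $U(M)$, $L(M)$ denote the sets of upper and lower bounds; $U(a,b)=U(\{a,b\})$ etc. A poset with complementation is a bounded poset $(P,\le,{}',0,1)$ with antitone involution $'$ ($x\le y\Rightarrow y'\le x'$, $x''=x$) such that $L(x,x')=\{0\}$, $U(x,x')=\{1\}$; it is pseudo-orthomodular if $L(U(L(x,y),y'),y)=L(x,y)$ for all $x,y$. A lattice with complementation is orthomodular if $x\vee y=((x\vee y)\wedge y')\vee y$ for all $x,y$. For a poset with complementation $\mathbf Q=(Q,\le,{}',0,1)$, a subset $X\subseteq Q$ is complement-closed and doubly dense in $\mathbf Q$ if: for every $a\in Q$, $a=\bigvee_{\mathbf Q}(L(a)\cap X)=\bigwedge_{\mathbf Q}(U(a)\cap X)$; $x\in X$ implies $x'\in X$; and $0,1\in X$. *)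

theory Defs
  imports Main
begin

text \<open>Posets are given by an explicit carrier set P and an order relation le
 (only its behaviour on P matters).\<close>

definition ubs :: "'a set \<Rightarrow> ('a \<Rightarrow> 'a \<Rightarrow> bool) \<Rightarrow> 'a set \<Rightarrow> 'a set" where
  "ubs P le M = {x \<in> P. \<forall>m\<in>M. le m x}"

definition lbs :: "'a set \<Rightarrow> ('a \<Rightarrow> 'a \<Rightarrow> bool) \<Rightarrow> 'a set \<Rightarrow> 'a set" where
  "lbs P le M = {x \<in> P. \<forall>m\<in>M. le x m}"

definition is_sup :: "'a set \<Rightarrow> ('a \<Rightarrow> 'a \<Rightarrow> bool) \<Rightarrow> 'a set \<Rightarrow> 'a \<Rightarrow> bool" where
  "is_sup P le M a \<longleftrightarrow> a \<in> ubs P le M \<and> (\<forall>u\<in>ubs P le M. le a u)"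

definition is_inf :: "'a set \<Rightarrow> ('a \<Rightarrow> 'a \<Rightarrow> bool) \<Rightarrow> 'a set \<Rightarrow> 'a \<Rightarrow> bool" where
  "is_inf P le M a \<longleftrightarrow> a \<in> lbs P le M \<and> (\<forall>l\<in>lbs P le M. le l a)"

definition jn :: "'a set \<Rightarrow> ('a \<Rightarrow> 'a \<Rightarrow> bool) \<Rightarrow> 'a \<Rightarrow> 'a \<Rightarrow> 'a" where
  "jn P le x y = (THE a. is_sup P le {x, y} a)"

definition mt :: "'a set \<Rightarrow> ('a \<Rightarrow> 'a \<Rightarrow> bool) \<Rightarrow> 'a \<Rightarrow> 'a \<Rightarrow> 'a" where
  "mt P le x y = (THE a. is_inf P le {x, y} a)"

definition partial_order_on' :: "'a set \<Rightarrow> ('a \<Rightarrow> 'a \<Rightarrow> bool) \<Rightarrow> bool" where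
  "partial_order_on' P le \<longleftrightarrow>
     (\<forall>x\<in>P. le x x) \<and>
     (\<forall>x\<in>P. \<forall>y\<in>P. le x y \<and> le y x \<longrightarrow> x = y) \<and>
     (\<forall>x\<in>P. \<forall>y\<in>P. \<forall>w\<in>P. le x y \<and> le y w \<longrightarrow> le x w)"

definition poset_compl :: "'a set \<Rightarrow> ('a \<Rightarrow> 'a \<Rightarrow> bool) \<Rightarrow> ('a \<Rightarrow> 'a) \<Rightarrow> 'a \<Rightarrow> 'a \<Rightarrow> bool" where
  "poset_compl P le c z t \<longleftrightarrow>
     partial_order_on' P le \<and> z \<in> P \<and> t \<in> P \<and>
     (\<forall>x\<in>P. le z x \<and> le x t) \<and>
     (\<forall>x\<in>P. c x \<in> P) \<and>
     (\<forall>x\<in>P. \<forall>y\<in>P. le x y \<longrightarrow> le (c y) (c x)) \<and>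
     (\<forall>x\<in>P. c (c x) = x) \<and>
     (\<forall>x\<in>P. lbs P le {x, c x} = {z} \<and> ubs P le {x, c x} = {t})"

definition pseudo_orthomodular :: "'a set \<Rightarrow> ('a \<Rightarrow> 'a \<Rightarrow> bool) \<Rightarrow> ('a \<Rightarrow> 'a) \<Rightarrow> 'a \<Rightarrow> 'a \<Rightarrow> bool" where
  "pseudo_orthomodular P le c z t \<longleftrightarrow>
     poset_compl P le c z t \<and>
     (\<forall>x\<in>P. \<forall>y\<in>P.
        lbs P le (ubs P le (lbs P le {x, y} \<union> {c y}) \<union> {y}) = lbs P le {x, y})"

definition lattice_compl :: "'a set \<Rightarrow> ('a \<Rightarrow> 'a \<Rightarrow> bool) \<Rightarrow> ('a \<Rightarrow> 'a) \<Rightarrow> 'a \<Rightarrow> 'a \<Rightarrow> bool" where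
  "lattice_compl P le c z t \<longleftrightarrow>
     poset_compl P le c z t \<and>
     (\<forall>x\<in>P. \<forall>y\<in>P. (\<exists>a. is_sup P le {x, y} a) \<and> (\<exists>a. is_inf P le {x, y} a))"

definition orthomodular_lattice :: "'a set \<Rightarrow> ('a \<Rightarrow> 'a \<Rightarrow> bool) \<Rightarrow> ('a \<Rightarrow> 'a) \<Rightarrow> 'a \<Rightarrow> 'a \<Rightarrow> bool" where
  "orthomodular_lattice P le c z t \<longleftrightarrow>
     lattice_compl P le c z t \<and>
     (\<forall>x\<in>P. \<forall>y\<in>P. jn P le x y = jn P le (mt P le (jn P le x y) (c y)) y)"

definition cc_doubly_dense :: "'a set \<Rightarrow> ('a \<Rightarrow> 'a \<Rightarrow> bool) \<Rightarrow> ('a \<Rightarrow> 'a) \<Rightarrow> 'a \<Rightarrow> 'a \<Rightarrow> 'a set \<Rightarrow> bool" where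
  "cc_doubly_dense Q le c z t X \<longleftrightarrow>
     X \<subseteq> Q \<and>
     (\<forall>a\<in>Q. is_sup Q le (lbs Q le {a} \<inter> X) a \<and> is_inf Q le (ubs Q le {a} \<inter> X) a) \<and>
     (\<forall>x\<in>X. c x \<in> X) \<and> z \<in> X \<and> t \<in> X"

end

theory Submission
  imports Defs
begin

(* (a) A pseudo-orthomodular poset P embeds, via x \<mapsto> L {x}, into its Dedekind-MacNeille
   completion: the cuts A = L (U A), ordered by inclusion, with orthocomplement
   A \<mapsto> L (c ` A) = c ` (U A).  For any poset with complementation this is an ortholattice
   in which the principal cuts are complement-closed and doubly dense.  Orthomodularity is
   where the pseudo-orthomodular law enters: it extends from the cuts L {x, y} to every cut
   below a principal one, which shows that for x in A, intersecting A with L {c x} does not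
   change the orthocomplement inside L {c x}.  For finite P, induction on the size of A
   then gives the criterion "A \<subseteq> B and B \<inter> A' = 0 imply A = B".
   (b) In an orthomodular lattice a \<le> b implies b \<and> (a \<or> b') = a.  Double density makes
   the lower and upper bounds in X of the sets occurring in the pseudo-orthomodular law the
   traces on X of principal ideals and filters of the lattice, and the law for X reduces to
   this identity with a = x \<and> y and b = y. *)

lemma lbs_subset: "lbs P le S \<subseteq> P"
  unfolding lbs_def by auto

lemma ubs_subset: "ubs P le S \<subseteq> P"
  unfolding ubs_def by auto

lemma lbs_antimono: "S \<subseteq> T \<Longrightarrow> lbs P le T \<subseteq> lbs P le S"
  unfolding lbs_def by auto

lemma ubs_antimono: "S \<subseteq> T \<Longrightarrow> ubs P le T \<subseteq> ubs P le S"
  unfolding ubs_def by auto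

lemma lbs_Un: "lbs P le (S \<union> T) = lbs P le S \<inter> lbs P le T"
  unfolding lbs_def by auto

lemma ubs_Un: "ubs P le (S \<union> T) = ubs P le S \<inter> ubs P le T"
  unfolding ubs_def by auto

lemma lbs_insert: "lbs P le (insert x S) = lbs P le {x} \<inter> lbs P le S"
  unfolding lbs_def by auto

lemma ubs_insert: "ubs P le (insert x S) = ubs P le {x} \<inter> ubs P le S"
  unfolding ubs_def by auto

lemma lbs_carrier_subset: "X \<subseteq> P \<Longrightarrow> lbs X le S = X \<inter> lbs P le S"
  unfolding lbs_def by auto

lemma ubs_carrier_subset: "X \<subseteq> P \<Longrightarrow> ubs X le S = X \<inter> ubs P le S"
  unfolding ubs_def by auto

lemma partial_order_on'_subset: "partial_order_on' S (\<subseteq>)"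
  unfolding partial_order_on'_def by auto

lemma is_supI:
  assumes "a \<in> P" and "\<And>m. m \<in> M \<Longrightarrow> le m a"
    and "\<And>u. u \<in> P \<Longrightarrow> (\<And>m. m \<in> M \<Longrightarrow> le m u) \<Longrightarrow> le a u"
  shows "is_sup P le M a"
  using assms unfolding is_sup_def ubs_def by auto

lemma is_infI:
  assumes "a \<in> P" and "\<And>m. m \<in> M \<Longrightarrow> le a m"
    and "\<And>l. l \<in> P \<Longrightarrow> (\<And>m. m \<in> M \<Longrightarrow> le l m) \<Longrightarrow> le l a"
  shows "is_inf P le M a"
  using assms unfolding is_inf_def lbs_def by auto

lemma jn_eq:
  assumes "partial_order_on' P le" and "is_sup P le {x, y} a"
  shows "jn P le x y = a"
  unfolding jn_def
proof (rule the_equality)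
  show "b = a" if "is_sup P le {x, y} b" for b
  proof -
    have "a \<in> P" "b \<in> P" "le a b" "le b a"
      using assms(2) that unfolding is_sup_def ubs_def by auto
    then show ?thesis
      using assms(1) unfolding partial_order_on'_def by blast
  qed
qed (fact assms(2))

lemma mt_eq:
  assumes "partial_order_on' P le" and "is_inf P le {x, y} a"
  shows "mt P le x y = a"
  unfolding mt_def
proof (rule the_equality)
  show "b = a" if "is_inf P le {x, y} b" for b
  proof -
    have "a \<in> P" "b \<in> P" "le a b" "le b a"
      using assms(2) that unfolding is_inf_def lbs_def by auto
    then show ?thesis
      using assms(1) unfolding partial_order_on'_def by blast
  qed
qed (fact assms(2))

lemma mt_commute: "mt P le x y = mt P le y x"
  unfolding mt_def by (simp add: insert_commute)

locale complemented_poset =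
  fixes P :: "'a set" and le :: "'a \<Rightarrow> 'a \<Rightarrow> bool" and c :: "'a \<Rightarrow> 'a" and z t :: 'a
  assumes poset_compl: "poset_compl P le c z t"
begin

abbreviation L :: "'a set \<Rightarrow> 'a set" where "L \<equiv> lbs P le"
abbreviation U :: "'a set \<Rightarrow> 'a set" where "U \<equiv> ubs P le"

lemma partial_order: "partial_order_on' P le"
  using poset_compl unfolding poset_compl_def by blast

lemma po_refl: "x \<in> P \<Longrightarrow> le x x"
  using partial_order unfolding partial_order_on'_def by blast

lemma po_antisym: "x \<in> P \<Longrightarrow> y \<in> P \<Longrightarrow> le x y \<Longrightarrow> le y x \<Longrightarrow> x = y"
  using partial_order unfolding partial_order_on'_def by blast

lemma po_trans: "x \<in> P \<Longrightarrow> y \<in> P \<Longrightarrow> w \<in> P \<Longrightarrow> le x y \<Longrightarrow> le y w \<Longrightarrow> le x w"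
  using partial_order unfolding partial_order_on'_def by blast

lemma bot_in: "z \<in> P" and top_in: "t \<in> P"
  and bot_le: "x \<in> P \<Longrightarrow> le z x" and le_top: "x \<in> P \<Longrightarrow> le x t"
  and compl_in: "x \<in> P \<Longrightarrow> c x \<in> P"
  and compl_antitone: "x \<in> P \<Longrightarrow> y \<in> P \<Longrightarrow> le x y \<Longrightarrow> le (c y) (c x)"
  and compl_compl: "x \<in> P \<Longrightarrow> c (c x) = x"
  and lbs_compl_pair: "x \<in> P \<Longrightarrow> L {x, c x} = {z}"
  and ubs_compl_pair: "x \<in> P \<Longrightarrow> U {x, c x} = {t}"
  using poset_compl unfolding poset_compl_def by auto

lemma le_compl_self_eq_bot:
  assumes "x \<in> P" and "le x (c x)"
  shows "x = z"
proof -
  have "x \<in> L {x, c x}" using assms po_refl by (simp add: lbs_def)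
  then show ?thesis using lbs_compl_pair[OF assms(1)] by simp
qed

lemma compl_bot: "c z = t"
proof -
  have "c z \<in> U {z, c z}" using bot_in compl_in bot_le po_refl by (simp add: ubs_def)
  then show ?thesis using ubs_compl_pair[OF bot_in] by simp
qed

lemma lbs_bot: "L {z} = {z}"
  using bot_in bot_le po_antisym[of _ z] po_refl[of z] by (auto simp: lbs_def)

lemma lbs_top: "L {t} = P"
  using le_top unfolding lbs_def by auto

lemma compl_image_compl: "S \<subseteq> P \<Longrightarrow> c ` c ` S = S"
  by (simp add: image_image compl_compl subset_iff cong: image_cong)

lemma lbs_image_compl:
  assumes "S \<subseteq> P"
  shows "L (c ` S) = c ` U S"
proof
  show "c ` U S \<subseteq> L (c ` S)"
  proof
    fix y assume "y \<in> c ` U S"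
    then obtain u where u: "u \<in> U S" "y = c u" by blast
    then have "u \<in> P" "\<forall>s\<in>S. le s u" by (auto simp: ubs_def)
    then show "y \<in> L (c ` S)"
      using u(2) assms compl_in compl_antitone unfolding lbs_def by auto
  qed
  show "L (c ` S) \<subseteq> c ` U S"
  proof
    fix y assume y: "y \<in> L (c ` S)"
    then have "y \<in> P" by (simp add: lbs_def)
    have "le s (c y)" if "s \<in> S" for s
    proof -
      have "le y (c s)" using y that by (auto simp: lbs_def)
      then show ?thesis
        using compl_antitone[of y "c s"] compl_compl compl_in \<open>y \<in> P\<close> that assms by auto
    qed
    then have "c y \<in> U S" using \<open>y \<in> P\<close> compl_in by (auto simp: ubs_def)
    then show "y \<in> c ` U S"
      using compl_compl[OF \<open>y \<in> P\<close>] by (metis image_eqI)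
  qed
qed

lemma ubs_image_compl:
  assumes "S \<subseteq> P"
  shows "U (c ` S) = c ` L S"
proof -
  have "c ` U (c ` S) = L S"
    using lbs_image_compl[of "c ` S"] assms compl_in compl_image_compl[OF assms] by auto
  then show ?thesis
    using compl_image_compl[OF ubs_subset] by metis
qed

lemma lbs_principal_subset_iff:
  assumes "x \<in> P" and "y \<in> P"
  shows "L {x} \<subseteq> L {y} \<longleftrightarrow> le x y"
proof
  assume "L {x} \<subseteq> L {y}"
  moreover have "x \<in> L {x}" using assms po_refl by (simp add: lbs_def)
  ultimately show "le x y" by (auto simp: lbs_def)
next
  assume "le x y"
  then show "L {x} \<subseteq> L {y}" using assms po_trans[of _ x y] by (auto simp: lbs_def)
qed

lemma lbs_principal_inj: "x \<in> P \<Longrightarrow> y \<in> P \<Longrightarrow> L {x} = L {y} \<Longrightarrow> x = y"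
  using lbs_principal_subset_iff[of x y] lbs_principal_subset_iff[of y x] po_antisym by simp

lemma ubs_principal_inj:
  assumes "x \<in> P" and "y \<in> P" and "U {x} = U {y}"
  shows "x = y"
proof -
  have "x \<in> U {x}" "y \<in> U {y}" using assms(1,2) po_refl by (simp_all add: ubs_def)
  then have "x \<in> U {y}" "y \<in> U {x}" using assms(3) by simp_all
  then show ?thesis using assms(1,2) po_antisym by (simp add: ubs_def)
qed

lemma ubs_lbs_principal:
  assumes "x \<in> P"
  shows "U (L {x}) = U {x}"
proof
  have "x \<in> L {x}" using assms po_refl by (simp add: lbs_def)
  then show "U (L {x}) \<subseteq> U {x}" by (auto simp: ubs_def)
  show "U {x} \<subseteq> U (L {x})"
    using assms po_trans[of _ x] by (auto simp: lbs_def ubs_def)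
qed

lemma subset_lbs_principal_iff: "A \<subseteq> P \<Longrightarrow> u \<in> P \<Longrightarrow> A \<subseteq> L {u} \<longleftrightarrow> u \<in> U A"
  unfolding lbs_def ubs_def by auto

definition is_cut :: "'a set \<Rightarrow> bool" where
  "is_cut A \<longleftrightarrow> L (U A) = A"

definition cuts :: "'a set set" where
  "cuts = Collect is_cut"

definition ortho :: "'a set \<Rightarrow> 'a set" where
  "ortho A = L (c ` A)"

lemma subset_lbs_ubs: "S \<subseteq> P \<Longrightarrow> S \<subseteq> L (U S)"
  unfolding lbs_def ubs_def by auto

lemma subset_ubs_lbs: "S \<subseteq> P \<Longrightarrow> S \<subseteq> U (L S)"
  unfolding lbs_def ubs_def by auto

lemma cut_subset: "is_cut A \<Longrightarrow> A \<subseteq> P"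
  using lbs_subset[of P le "U A"] unfolding is_cut_def by simp

lemma is_cut_lbs: "S \<subseteq> P \<Longrightarrow> is_cut (L S)"
  unfolding is_cut_def
  using subset_lbs_ubs[OF lbs_subset] lbs_antimono[OF subset_ubs_lbs] by (rule antisym[rotated])

lemma lbs_ubs_subset_cut: "is_cut A \<Longrightarrow> S \<subseteq> A \<Longrightarrow> L (U S) \<subseteq> A"
  unfolding is_cut_def using lbs_antimono[OF ubs_antimono] by blast

lemma is_cut_Int: "is_cut A \<Longrightarrow> is_cut B \<Longrightarrow> is_cut (A \<inter> B)"
proof -
  assume "is_cut A" "is_cut B"
  then have "L (U (A \<inter> B)) \<subseteq> A \<inter> B"
    by (intro Int_greatest lbs_ubs_subset_cut Int_lower1 Int_lower2)
  moreover have "A \<inter> B \<subseteq> L (U (A \<inter> B))"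
    using cut_subset[OF \<open>is_cut A\<close>] by (intro subset_lbs_ubs) blast
  ultimately show ?thesis unfolding is_cut_def by (rule antisym)
qed

lemma is_cut_carrier: "is_cut P"
  using is_cut_lbs[of "{t}"] lbs_top top_in by simp

lemma is_cut_bot: "is_cut {z}"
  using is_cut_lbs[of "{z}"] lbs_bot bot_in by simp

lemma bot_in_cut: "is_cut A \<Longrightarrow> z \<in> A"
proof -
  assume "is_cut A"
  moreover have "z \<in> L (U {})" using bot_in bot_le by (simp add: lbs_def ubs_def)
  ultimately show ?thesis using lbs_ubs_subset_cut[of A "{}"] by auto
qed

lemma principal_subset_cut_iff: "is_cut A \<Longrightarrow> x \<in> P \<Longrightarrow> L {x} \<subseteq> A \<longleftrightarrow> x \<in> A"
proof
  assume "is_cut A" "x \<in> P" "L {x} \<subseteq> A"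
  then show "x \<in> A" using po_refl by (auto simp: lbs_def)
next
  assume "is_cut A" "x \<in> P" "x \<in> A"
  then have "L (U (L {x})) \<subseteq> A" using ubs_lbs_principal lbs_ubs_subset_cut[of A "{x}"] by simp
  then show "L {x} \<subseteq> A" using subset_lbs_ubs[OF lbs_subset[of P le "{x}"]] by (rule order_trans[rotated])
qed

lemma ortho_eq: "A \<subseteq> P \<Longrightarrow> ortho A = c ` U A"
  unfolding ortho_def by (rule lbs_image_compl)

lemma is_cut_ortho: "A \<subseteq> P \<Longrightarrow> is_cut (ortho A)"
  unfolding ortho_def using compl_in by (intro is_cut_lbs) auto

lemma ortho_antimono: "A \<subseteq> B \<Longrightarrow> ortho B \<subseteq> ortho A"
  unfolding ortho_def by (intro lbs_antimono image_mono)

lemma ubs_ortho: "is_cut A \<Longrightarrow> U (ortho A) = c ` A"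
  using ortho_eq[OF cut_subset] ubs_image_compl[OF ubs_subset] unfolding is_cut_def by simp

lemma ortho_ortho: "is_cut A \<Longrightarrow> ortho (ortho A) = A"
  using ortho_eq[OF cut_subset, OF is_cut_ortho, OF cut_subset] ubs_ortho compl_image_compl cut_subset
  by simp

lemma cut_Int_ortho: "A \<subseteq> P \<Longrightarrow> A \<inter> ortho A \<subseteq> {z}"
proof
  fix x assume "A \<subseteq> P" "x \<in> A \<inter> ortho A"
  then have "x \<in> P" "le x (c x)" by (auto simp: ortho_def lbs_def)
  then show "x \<in> {z}" using le_compl_self_eq_bot by simp
qed

lemma ortho_bot: "ortho {z} = P"
  unfolding ortho_def using compl_bot lbs_top by simp

lemma ortho_principal: "x \<in> P \<Longrightarrow> ortho (L {x}) = L {c x}"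
  using ortho_eq[OF lbs_subset] ubs_lbs_principal lbs_image_compl[of "{x}"] by simp

lemma is_sup_cuts:
  assumes "is_cut A" and "is_cut B"
  shows "is_sup cuts (\<subseteq>) {A, B} (L (U (A \<union> B)))"
proof (rule is_supI)
  show "L (U (A \<union> B)) \<in> cuts" using is_cut_lbs[OF ubs_subset] by (simp add: cuts_def)
  have "A \<union> B \<subseteq> L (U (A \<union> B))"
    using assms cut_subset by (intro subset_lbs_ubs) auto
  then show "M \<subseteq> L (U (A \<union> B))" if "M \<in> {A, B}" for M
    using that by auto
  show "L (U (A \<union> B)) \<subseteq> D" if "D \<in> cuts" "\<And>M. M \<in> {A, B} \<Longrightarrow> M \<subseteq> D" for D
    using that by (intro lbs_ubs_subset_cut) (auto simp: cuts_def)
qed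

lemma is_inf_cuts: "is_cut A \<Longrightarrow> is_cut B \<Longrightarrow> is_inf cuts (\<subseteq>) {A, B} (A \<inter> B)"
  by (rule is_infI) (auto simp: cuts_def intro: is_cut_Int)

lemma jn_cuts: "is_cut A \<Longrightarrow> is_cut B \<Longrightarrow> jn cuts (\<subseteq>) A B = L (U (A \<union> B))"
  by (rule jn_eq[OF partial_order_on'_subset is_sup_cuts])

lemma mt_cuts: "is_cut A \<Longrightarrow> is_cut B \<Longrightarrow> mt cuts (\<subseteq>) A B = A \<inter> B"
  by (rule mt_eq[OF partial_order_on'_subset is_inf_cuts])

lemma lbs_cuts_ortho_pair:
  assumes "is_cut A"
  shows "lbs cuts (\<subseteq>) {A, ortho A} = {{z}}"
proof -
  have "B = {z}" if "is_cut B" "B \<subseteq> A" "B \<subseteq> ortho A" for B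
  proof -
    have "B \<subseteq> A \<inter> ortho A" using that(2,3) by (rule Int_greatest)
    then have "B \<subseteq> {z}" using cut_Int_ortho[OF cut_subset[OF assms]] by (rule order_trans)
    then show ?thesis using bot_in_cut[OF that(1)] by auto
  qed
  moreover have "{z} \<in> lbs cuts (\<subseteq>) {A, ortho A}"
    using bot_in_cut[OF assms] bot_in_cut[OF is_cut_ortho[OF cut_subset[OF assms]]] is_cut_bot
    by (simp add: lbs_def cuts_def)
  ultimately show ?thesis by (auto simp: lbs_def cuts_def)
qed

lemma ubs_cuts_ortho_pair:
  assumes "is_cut A"
  shows "ubs cuts (\<subseteq>) {A, ortho A} = {P}"
proof -
  have "B = P" if B: "is_cut B" "A \<subseteq> B" "ortho A \<subseteq> B" for B
  proof -
    have "ortho B \<subseteq> ortho A \<inter> A"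
      using ortho_antimono[OF B(2)] ortho_antimono[OF B(3)] ortho_ortho[OF assms] by blast
    then have "ortho B = {z}"
      using cut_Int_ortho[OF cut_subset[OF assms]] bot_in_cut[OF is_cut_ortho[OF cut_subset[OF B(1)]]]
      by blast
    then show "B = P"
      using ortho_ortho[OF B(1)] ortho_bot by simp
  qed
  moreover have "A \<subseteq> P" "ortho A \<subseteq> P"
    using assms cut_subset is_cut_ortho by auto
  ultimately show ?thesis
    using is_cut_carrier unfolding ubs_def cuts_def by auto
qed

lemma poset_compl_cuts: "poset_compl cuts (\<subseteq>) ortho {z} P"
  unfolding poset_compl_def
proof (intro conjI ballI impI)
  show "partial_order_on' cuts (\<subseteq>)" by (rule partial_order_on'_subset)
  show "{z} \<in> cuts" "P \<in> cuts"
    using is_cut_bot is_cut_carrier by (simp_all add: cuts_def)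
  fix A assume "A \<in> cuts"
  then have A: "is_cut A" by (simp add: cuts_def)
  show "{z} \<subseteq> A" "A \<subseteq> P" using bot_in_cut[OF A] cut_subset[OF A] by auto
  show "ortho A \<in> cuts" using is_cut_ortho[OF cut_subset[OF A]] by (simp add: cuts_def)
  show "ortho (ortho A) = A" by (rule ortho_ortho[OF A])
  show "lbs cuts (\<subseteq>) {A, ortho A} = {{z}}" by (rule lbs_cuts_ortho_pair[OF A])
  show "ubs cuts (\<subseteq>) {A, ortho A} = {P}" by (rule ubs_cuts_ortho_pair[OF A])
next
  fix A B :: "'a set" assume "A \<subseteq> B"
  then show "ortho B \<subseteq> ortho A" by (rule ortho_antimono)
qed

lemma lattice_compl_cuts: "lattice_compl cuts (\<subseteq>) ortho {z} P"
  unfolding lattice_compl_def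
proof (intro conjI ballI)
  fix A B assume "A \<in> cuts" "B \<in> cuts"
  then have "is_cut A" "is_cut B" by (simp_all add: cuts_def)
  then show "\<exists>S. is_sup cuts (\<subseteq>) {A, B} S" "\<exists>I. is_inf cuts (\<subseteq>) {A, B} I"
    using is_sup_cuts is_inf_cuts by blast+
qed (rule poset_compl_cuts)

lemma is_sup_principal_cuts_below:
  assumes "is_cut A"
  shows "is_sup cuts (\<subseteq>) (lbs cuts (\<subseteq>) {A} \<inter> (\<lambda>x. L {x}) ` P) A"
proof (rule is_supI)
  show "A \<in> cuts" using assms by (simp add: cuts_def)
  show "M \<subseteq> A" if "M \<in> lbs cuts (\<subseteq>) {A} \<inter> (\<lambda>x. L {x}) ` P" for M
    using that by (simp add: lbs_def)
  show "A \<subseteq> D" if "\<And>M. M \<in> lbs cuts (\<subseteq>) {A} \<inter> (\<lambda>x. L {x}) ` P \<Longrightarrow> M \<subseteq> D" for D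
  proof
    fix x assume "x \<in> A"
    then have x: "x \<in> P" "L {x} \<subseteq> A"
      using cut_subset[OF assms] principal_subset_cut_iff[OF assms] by auto
    then have "L {x} \<in> lbs cuts (\<subseteq>) {A} \<inter> (\<lambda>x. L {x}) ` P"
      using is_cut_lbs[of "{x}"] by (simp add: lbs_def cuts_def)
    then show "x \<in> D" using that x(1) po_refl by (force simp: lbs_def)
  qed
qed

lemma is_inf_principal_cuts_above:
  assumes "is_cut A"
  shows "is_inf cuts (\<subseteq>) (ubs cuts (\<subseteq>) {A} \<inter> (\<lambda>x. L {x}) ` P) A"
proof (rule is_infI)
  show "A \<in> cuts" using assms by (simp add: cuts_def)
  show "A \<subseteq> M" if "M \<in> ubs cuts (\<subseteq>) {A} \<inter> (\<lambda>x. L {x}) ` P" for M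
    using that by (simp add: ubs_def)
  show "D \<subseteq> A" if D: "D \<in> cuts" "\<And>M. M \<in> ubs cuts (\<subseteq>) {A} \<inter> (\<lambda>x. L {x}) ` P \<Longrightarrow> D \<subseteq> M"
    for D
  proof -
    have "D \<subseteq> L {u}" if "u \<in> U A" for u
    proof -
      have "u \<in> P" using that by (simp add: ubs_def)
      moreover have "A \<subseteq> L {u}"
        using that subset_lbs_principal_iff[OF cut_subset[OF assms] \<open>u \<in> P\<close>] by simp
      ultimately have "L {u} \<in> ubs cuts (\<subseteq>) {A} \<inter> (\<lambda>x. L {x}) ` P"
        using is_cut_lbs[of "{u}"] by (simp add: ubs_def cuts_def)
      then show ?thesis by (rule D(2))
    qed
    moreover have "D \<subseteq> P" using D(1) cut_subset by (simp add: cuts_def)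
    ultimately have "D \<subseteq> L (U A)" by (auto simp: lbs_def)
    then show ?thesis using assms by (simp add: is_cut_def)
  qed
qed

lemma cc_doubly_dense_principal_cuts: "cc_doubly_dense cuts (\<subseteq>) ortho {z} P ((\<lambda>x. L {x}) ` P)"
  unfolding cc_doubly_dense_def
proof (intro conjI ballI)
  show "(\<lambda>x. L {x}) ` P \<subseteq> cuts" using is_cut_lbs by (auto simp: cuts_def)
  show "{z} \<in> (\<lambda>x. L {x}) ` P" using lbs_bot bot_in by (metis image_eqI)
  show "P \<in> (\<lambda>x. L {x}) ` P" using lbs_top top_in by (metis image_eqI)
  show "ortho A \<in> (\<lambda>x. L {x}) ` P" if "A \<in> (\<lambda>x. L {x}) ` P" for A
    using that ortho_principal compl_in by auto
  show "is_sup cuts (\<subseteq>) (lbs cuts (\<subseteq>) {A} \<inter> (\<lambda>x. L {x}) ` P) A"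
    and "is_inf cuts (\<subseteq>) (ubs cuts (\<subseteq>) {A} \<inter> (\<lambda>x. L {x}) ` P) A" if "A \<in> cuts" for A
    using that is_sup_principal_cuts_below is_inf_principal_cuts_above by (simp_all add: cuts_def)
qed

lemma bij_betw_principal_cuts: "bij_betw (\<lambda>x. L {x}) P ((\<lambda>x. L {x}) ` P)"
  by (rule inj_on_imp_bij_betw) (auto intro: inj_onI lbs_principal_inj)

lemma inj_on_compl: "inj_on c P"
  by (metis compl_compl inj_onI)

lemma finite_cuts: "finite P \<Longrightarrow> finite cuts"
  unfolding cuts_def using cut_subset by (auto intro: finite_subset[of _ "Pow P"])

lemma poset_compl_subset:
  assumes "X \<subseteq> P" and "\<forall>x\<in>X. c x \<in> X" and "z \<in> X" and "t \<in> X"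
  shows "poset_compl X le c z t"
  unfolding poset_compl_def
proof (intro conjI ballI impI)
  show "partial_order_on' X le"
    using partial_order assms(1) unfolding partial_order_on'_def by blast
  show "z \<in> X" "t \<in> X" by (fact assms(3), fact assms(4))
  fix x assume "x \<in> X"
  then have x: "x \<in> P" using assms(1) by blast
  show "le z x" "le x t" "c (c x) = x" using x bot_le le_top compl_compl by simp_all
  show "c x \<in> X" using \<open>x \<in> X\<close> assms(2) by blast
  show "lbs X le {x, c x} = {z}"
    using lbs_carrier_subset[OF assms(1)] lbs_compl_pair[OF x] assms(3) by auto
  show "ubs X le {x, c x} = {t}"
    using ubs_carrier_subset[OF assms(1)] ubs_compl_pair[OF x] assms(4) by auto
next
  fix x y assume "x \<in> X" "y \<in> X" "le x y"
  then show "le (c y) (c x)" using assms(1) compl_antitone by blast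
qed

lemma ubs_lbs_dense:
  assumes "cc_doubly_dense P le c z t X" and "a \<in> P"
  shows "U (L {a} \<inter> X) = U {a}"
proof
  have "is_sup P le (L {a} \<inter> X) a"
    using assms unfolding cc_doubly_dense_def by blast
  then show "U (L {a} \<inter> X) \<subseteq> U {a}"
    unfolding is_sup_def by (auto simp: ubs_def)
  show "U {a} \<subseteq> U (L {a} \<inter> X)"
    using assms(2) po_trans[of _ a] by (auto simp: lbs_def ubs_def)
qed

lemma lbs_ubs_dense:
  assumes "cc_doubly_dense P le c z t X" and "a \<in> P"
  shows "L (U {a} \<inter> X) = L {a}"
proof
  have "is_inf P le (U {a} \<inter> X) a"
    using assms unfolding cc_doubly_dense_def by blast
  then show "L (U {a} \<inter> X) \<subseteq> L {a}"
    unfolding is_inf_def by (auto simp: lbs_def)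
  show "L {a} \<subseteq> L (U {a} \<inter> X)"
    using assms(2) po_trans[of _ a] by (auto simp: lbs_def ubs_def)
qed

end

locale pseudo_orthomodular_poset = complemented_poset +
  assumes pseudo_orthomodular_law:
    "x \<in> P \<Longrightarrow> y \<in> P \<Longrightarrow> L (U (L {x, y} \<union> {c y}) \<union> {y}) = L {x, y}"
begin

text \<open>Every cut below y is the intersection of the cuts L {m, y} with m \<in> U D, for which the
  law is postulated.\<close>

lemma pseudo_orthomodular_law_cut:
  assumes "is_cut D" and "y \<in> P" and "D \<subseteq> L {y}"
  shows "L (U (D \<union> {c y}) \<union> {y}) \<subseteq> D"
proof -
  have "L (U (D \<union> {c y}) \<union> {y}) \<subseteq> L {m}" if "m \<in> U D" for m
  proof -
    have "m \<in> P" using that by (simp add: ubs_def)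
    have "D \<subseteq> L {m, y}"
      using that assms(3) cut_subset[OF assms(1)] by (auto simp: lbs_def ubs_def)
    then have "L (U (D \<union> {c y}) \<union> {y}) \<subseteq> L (U (L {m, y} \<union> {c y}) \<union> {y})"
      by (intro lbs_antimono Un_mono ubs_antimono order_refl)
    also have "\<dots> = L {m, y}"
      by (rule pseudo_orthomodular_law[OF \<open>m \<in> P\<close> assms(2)])
    also have "\<dots> \<subseteq> L {m}"
      by (rule lbs_antimono) simp
    finally show ?thesis .
  qed
  then have "L (U (D \<union> {c y}) \<union> {y}) \<subseteq> L (U D)"
    by (auto simp: lbs_def)
  then show ?thesis
    using assms(1) by (simp add: is_cut_def)
qed

lemma ortho_cut_eq:
  assumes "is_cut D" and "x \<in> D"
  shows "ortho D = ortho (D \<inter> L {c x}) \<inter> L {c x}"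
proof
  have x: "x \<in> P" using assms cut_subset by blast
  have below: "ortho D \<subseteq> L {c x}"
    using assms(2) by (auto simp: ortho_def lbs_def)
  then show "ortho D \<subseteq> ortho (D \<inter> L {c x}) \<inter> L {c x}"
    using ortho_antimono[OF Int_lower1] by blast
  have "U {x} = c ` L {c x}"
    using ubs_image_compl[of "{c x}"] x compl_in compl_compl by simp
  then have "U (ortho D \<union> {x}) = c ` D \<inter> c ` L {c x}"
    using ubs_Un[of P le "ortho D" "{x}"] ubs_ortho[OF assms(1)] by (simp only:)
  also have "\<dots> = c ` (D \<inter> L {c x})"
    using inj_on_image_Int[OF inj_on_compl cut_subset[OF assms(1)] lbs_subset] by simp
  finally have "ortho (D \<inter> L {c x}) \<inter> L {c x} = L (U (ortho D \<union> {x}) \<union> {c x})"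
    by (simp only: ortho_def[of "D \<inter> L {c x}"] lbs_Un)
  also have "\<dots> = L (U (ortho D \<union> {c (c x)}) \<union> {c x})"
    using compl_compl[OF x] by simp
  also have "\<dots> \<subseteq> ortho D"
    using is_cut_ortho[OF cut_subset[OF assms(1)]] compl_in[OF x] below
    by (rule pseudo_orthomodular_law_cut)
  finally show "ortho (D \<inter> L {c x}) \<inter> L {c x} \<subseteq> ortho D" .
qed

text \<open>Finiteness is used only here, for the induction on the size of A.\<close>

lemma cut_eq_if_Int_ortho_bot:
  assumes "finite P" and "is_cut A" and "is_cut B" and "A \<subseteq> B" and "B \<inter> ortho A \<subseteq> {z}"
  shows "A = B"
  using assms(2-)
proof (induction "card A" arbitrary: A B rule: less_induct)
  case less
  show ?case
  proof (cases "A \<subseteq> {z}")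
    case True
    then have "A = {z}" using bot_in_cut[OF less.prems(1)] by auto
    then show ?thesis
      using less.prems(3,4) ortho_bot cut_subset[OF less.prems(2)] by auto
  next
    case False
    then obtain x where x: "x \<in> A" "x \<noteq> z" by auto
    have "x \<in> P" using x(1) cut_subset[OF less.prems(1)] by blast
    define A' where "A' = A \<inter> L {c x}"
    define B' where "B' = B \<inter> L {c x}"
    have cut': "is_cut A'" "is_cut B'"
      unfolding A'_def B'_def using less.prems(1,2) is_cut_lbs[of "{c x}"] compl_in[OF \<open>x \<in> P\<close>]
      by (simp_all add: is_cut_Int)
    have "x \<notin> A'"
      using x le_compl_self_eq_bot[OF \<open>x \<in> P\<close>] by (auto simp: A'_def lbs_def)
    then have "card A' < card A"
      using x(1) finite_subset[OF cut_subset[OF less.prems(1)] assms(1)]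
      by (intro psubset_card_mono) (auto simp: A'_def)
    moreover have "A' \<subseteq> B'"
      using less.prems(3) by (auto simp: A'_def B'_def)
    moreover have "B' \<inter> ortho A' \<subseteq> {z}"
      using less.prems(4) ortho_cut_eq[OF less.prems(1) x(1)] by (auto simp: A'_def B'_def)
    ultimately have "A' = B'"
      using less.hyps cut' by blast
    then have "ortho A = ortho B"
      using ortho_cut_eq[OF less.prems(1) x(1)] ortho_cut_eq[OF less.prems(2)] less.prems(3) x(1)
      by (auto simp: A'_def B'_def)
    then show ?thesis
      using ortho_ortho less.prems(1,2) by metis
  qed
qed

lemma orthomodular_law_cuts:
  assumes "finite P" and "is_cut A" and "is_cut B"
  shows "jn cuts (\<subseteq>) A B = jn cuts (\<subseteq>) (mt cuts (\<subseteq>) (jn cuts (\<subseteq>) A B) (ortho B)) B"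
proof -
  define S where "S = jn cuts (\<subseteq>) A B"
  have "A \<union> B \<subseteq> L (U (A \<union> B))"
    using cut_subset[OF assms(2)] cut_subset[OF assms(3)] by (intro subset_lbs_ubs) simp
  then have S: "is_cut S" "B \<subseteq> S"
    unfolding S_def jn_cuts[OF assms(2,3)] using is_cut_lbs[OF ubs_subset] by auto
  have ortho_B: "is_cut (ortho B)"
    using is_cut_ortho[OF cut_subset[OF assms(3)]] .
  define C where "C = L (U (S \<inter> ortho B \<union> B))"
  have C: "is_cut C" "S \<inter> ortho B \<subseteq> C" "B \<subseteq> C" "C \<subseteq> S"
    unfolding C_def
    using is_cut_lbs[OF ubs_subset] subset_lbs_ubs[of "S \<inter> ortho B \<union> B"]
      cut_subset[OF S(1)] cut_subset[OF assms(3)] lbs_ubs_subset_cut[OF S(1)] S(2)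
    by auto
  have "S \<inter> ortho C \<subseteq> {z}"
  proof -
    have "S \<inter> ortho C \<subseteq> C \<inter> ortho C"
      using C(2) ortho_antimono[OF C(3)] by blast
    also have "\<dots> \<subseteq> {z}"
      using cut_Int_ortho[OF cut_subset[OF C(1)]] .
    finally show ?thesis .
  qed
  then have "C = S"
    using cut_eq_if_Int_ortho_bot[OF assms(1) C(1) S(1) C(4)] by simp
  then show ?thesis
    unfolding S_def[symmetric] mt_cuts[OF S(1) ortho_B] jn_cuts[OF is_cut_Int[OF S(1) ortho_B] assms(3)]
    by (simp add: C_def)
qed

lemma orthomodular_cuts: "finite P \<Longrightarrow> orthomodular_lattice cuts (\<subseteq>) ortho {z} P"
  unfolding orthomodular_lattice_def
  using lattice_compl_cuts orthomodular_law_cuts by (simp add: cuts_def)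

end

lemma pseudo_orthomodular_poset_if_pseudo_orthomodular:
  "pseudo_orthomodular P le c z t \<Longrightarrow> pseudo_orthomodular_poset P le c z t"
  unfolding pseudo_orthomodular_def pseudo_orthomodular_poset_def
    pseudo_orthomodular_poset_axioms_def complemented_poset_def
  by blast

locale complemented_lattice = complemented_poset +
  assumes sup_exists: "x \<in> P \<Longrightarrow> y \<in> P \<Longrightarrow> \<exists>a. is_sup P le {x, y} a"
    and inf_exists: "x \<in> P \<Longrightarrow> y \<in> P \<Longrightarrow> \<exists>a. is_inf P le {x, y} a"
begin

lemma is_sup_jn: "x \<in> P \<Longrightarrow> y \<in> P \<Longrightarrow> is_sup P le {x, y} (jn P le x y)"
  using sup_exists jn_eq[OF partial_order] by metis

lemma is_inf_mt: "x \<in> P \<Longrightarrow> y \<in> P \<Longrightarrow> is_inf P le {x, y} (mt P le x y)"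
  using inf_exists mt_eq[OF partial_order] by metis

lemma jn_in: "x \<in> P \<Longrightarrow> y \<in> P \<Longrightarrow> jn P le x y \<in> P"
  using is_sup_jn by (simp add: is_sup_def ubs_def)

lemma mt_in: "x \<in> P \<Longrightarrow> y \<in> P \<Longrightarrow> mt P le x y \<in> P"
  using is_inf_mt by (simp add: is_inf_def lbs_def)

lemma ubs_pair_eq_ubs_jn:
  assumes "x \<in> P" and "y \<in> P"
  shows "U {x, y} = U {jn P le x y}"
proof
  show "U {x, y} \<subseteq> U {jn P le x y}"
    using is_sup_jn[OF assms] by (auto simp: is_sup_def ubs_def)
  show "U {jn P le x y} \<subseteq> U {x, y}"
    using is_sup_jn[OF assms] jn_in[OF assms] assms po_trans[of _ "jn P le x y"]
    by (auto simp: is_sup_def ubs_def)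
qed

lemma lbs_pair_eq_lbs_mt:
  assumes "x \<in> P" and "y \<in> P"
  shows "L {x, y} = L {mt P le x y}"
proof
  show "L {x, y} \<subseteq> L {mt P le x y}"
    using is_inf_mt[OF assms] by (auto simp: is_inf_def lbs_def)
  show "L {mt P le x y} \<subseteq> L {x, y}"
    using is_inf_mt[OF assms] mt_in[OF assms] assms po_trans[of _ "mt P le x y"]
    by (auto simp: is_inf_def lbs_def)
qed

lemma jn_absorb:
  assumes "x \<in> P" and "y \<in> P" and "le y x"
  shows "jn P le x y = x"
proof -
  have "U {x, y} = U {x}"
    using assms po_trans[of y x] by (auto simp: ubs_def)
  then show ?thesis
    using ubs_pair_eq_ubs_jn[OF assms(1,2)] ubs_principal_inj[OF jn_in[OF assms(1,2)] assms(1)] by simp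
qed

lemma compl_mt:
  assumes "x \<in> P" and "y \<in> P"
  shows "c (mt P le x y) = jn P le (c x) (c y)"
proof (rule ubs_principal_inj)
  have "U {c (mt P le x y)} = c ` L {mt P le x y}"
    using ubs_image_compl[of "{mt P le x y}"] mt_in[OF assms] by simp
  also have "\<dots> = c ` L {x, y}"
    by (simp only: lbs_pair_eq_lbs_mt[OF assms])
  also have "\<dots> = U {c x, c y}"
    using ubs_image_compl[of "{x, y}"] assms by simp
  also have "\<dots> = U {jn P le (c x) (c y)}"
    using ubs_pair_eq_ubs_jn compl_in assms by simp
  finally show "U {c (mt P le x y)} = U {jn P le (c x) (c y)}" .
qed (use assms compl_in mt_in jn_in in simp_all)

lemma compl_jn:
  assumes "x \<in> P" and "y \<in> P"
  shows "c (jn P le x y) = mt P le (c x) (c y)"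
  using compl_mt[of "c x" "c y"] compl_compl compl_in mt_in assms by metis

end

locale orthomodular_complemented_lattice = complemented_lattice +
  assumes orthomodular_law:
    "x \<in> P \<Longrightarrow> y \<in> P \<Longrightarrow> jn P le x y = jn P le (mt P le (jn P le x y) (c y)) y"
begin

lemma mt_jn_compl_eq:
  assumes "a \<in> P" and "b \<in> P" and "le a b"
  shows "mt P le b (jn P le a (c b)) = a"
proof -
  have ca: "c a \<in> P" and cb: "c b \<in> P" using assms compl_in by simp_all
  have "jn P le (c a) (c b) = c a"
    using jn_absorb[OF ca cb] compl_antitone assms by simp
  then have "c a = jn P le (mt P le (c a) b) (c b)"
    using orthomodular_law[OF ca cb] compl_compl assms(2) by simp
  then have "a = c (jn P le (mt P le (c a) b) (c b))"
    using compl_compl assms(1) by simp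
  also have "\<dots> = mt P le (c (mt P le (c a) b)) b"
    using compl_jn mt_in ca cb assms(2) compl_compl by simp
  also have "\<dots> = mt P le (jn P le a (c b)) b"
    using compl_mt ca assms compl_compl by simp
  finally show ?thesis
    by (simp add: mt_commute)
qed

lemma pseudo_orthomodular_dense_subset:
  assumes dense: "cc_doubly_dense P le c z t X"
  shows "pseudo_orthomodular X le c z t"
  unfolding pseudo_orthomodular_def
proof (intro conjI ballI)
  have X: "X \<subseteq> P" "\<forall>x\<in>X. c x \<in> X" "z \<in> X" "t \<in> X"
    using dense unfolding cc_doubly_dense_def by blast+
  then show "poset_compl X le c z t" by (rule poset_compl_subset)
  fix x y assume "x \<in> X" "y \<in> X"
  then have x: "x \<in> P" and y: "y \<in> P" using X(1) by blast+
  define m where "m = mt P le x y"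
  define w where "w = jn P le m (c y)"
  have m: "m \<in> P" "le m y"
    using mt_in[OF x y] is_inf_mt[OF x y] by (auto simp: m_def is_inf_def lbs_def)
  have w: "w \<in> P" using jn_in[OF m(1) compl_in[OF y]] by (simp add: w_def)
  have lower: "lbs X le {x, y} = X \<inter> L {m}"
    using lbs_carrier_subset[OF X(1)] lbs_pair_eq_lbs_mt[OF x y] by (simp add: m_def)
  have "ubs X le (X \<inter> L {m} \<union> {c y}) = X \<inter> (U (L {m} \<inter> X) \<inter> U {c y})"
    by (simp only: ubs_carrier_subset[OF X(1)] ubs_Un Int_commute[of X "L {m}"]) blast
  also have "\<dots> = X \<inter> U {w}"
    using ubs_lbs_dense[OF dense m(1)] ubs_insert[of P le m "{c y}"]
      ubs_pair_eq_ubs_jn[OF m(1) compl_in[OF y]] by (simp add: w_def)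
  finally have upper: "ubs X le (X \<inter> L {m} \<union> {c y}) = X \<inter> U {w}" .
  have "lbs X le (X \<inter> U {w} \<union> {y}) = X \<inter> (L (U {w} \<inter> X) \<inter> L {y})"
    by (simp only: lbs_carrier_subset[OF X(1)] lbs_Un Int_commute[of X "U {w}"]) blast
  also have "\<dots> = X \<inter> L {mt P le y w}"
    using lbs_ubs_dense[OF dense w] lbs_insert[of P le w "{y}"]
      lbs_pair_eq_lbs_mt[OF w y] mt_commute[of P le w y] by simp
  also have "\<dots> = X \<inter> L {m}"
    using mt_jn_compl_eq[OF m(1) y m(2)] by (simp add: w_def)
  finally show "lbs X le (ubs X le (lbs X le {x, y} \<union> {c y}) \<union> {y}) = lbs X le {x, y}"
    using lower upper by simp
qed

end

lemma orthomodular_complemented_lattice_if_orthomodular_lattice: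
  "orthomodular_lattice P le c z t \<Longrightarrow> orthomodular_complemented_lattice P le c z t"
  unfolding orthomodular_lattice_def lattice_compl_def orthomodular_complemented_lattice_def
    orthomodular_complemented_lattice_axioms_def complemented_lattice_def
    complemented_lattice_axioms_def complemented_poset_def
  by blast

theorem theorem8:
  shows "(\<forall>(P :: 'a set) le c z t. finite P \<and> pseudo_orthomodular P le c z t \<longrightarrow>
            (\<exists>(Q :: 'a set set) leQ cQ zQ tQ X f.
               finite Q \<and> orthomodular_lattice Q leQ cQ zQ tQ \<and>
               cc_doubly_dense Q leQ cQ zQ tQ X \<and>
               bij_betw f P X \<and>
               (\<forall>x\<in>P. \<forall>y\<in>P. le x y \<longleftrightarrow> leQ (f x) (f y)) \<and>
               (\<forall>x\<in>P. f (c x) = cQ (f x)) \<and> f z = zQ \<and> f t = tQ))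
       \<and> (\<forall>(Q :: 'b set) le c z t X. finite Q \<and> orthomodular_lattice Q le c z t \<and>
            cc_doubly_dense Q le c z t X \<longrightarrow>
              finite X \<and> pseudo_orthomodular X le c z t)"
proof (rule conjI; intro allI impI)
  fix P :: "'a set" and le c z t
  assume "finite P \<and> pseudo_orthomodular P le c z t"
  then have fin: "finite P" and pom: "pseudo_orthomodular P le c z t" by simp_all
  interpret pseudo_orthomodular_poset P le c z t
    by (rule pseudo_orthomodular_poset_if_pseudo_orthomodular[OF pom])
  show "\<exists>(Q :: 'a set set) leQ cQ zQ tQ X f.
          finite Q \<and> orthomodular_lattice Q leQ cQ zQ tQ \<and> cc_doubly_dense Q leQ cQ zQ tQ X \<and>
          bij_betw f P X \<and> (\<forall>x\<in>P. \<forall>y\<in>P. le x y \<longleftrightarrow> leQ (f x) (f y)) \<and>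
          (\<forall>x\<in>P. f (c x) = cQ (f x)) \<and> f z = zQ \<and> f t = tQ"
  proof (intro exI conjI)
    show "finite cuts" by (rule finite_cuts[OF fin])
    show "orthomodular_lattice cuts (\<subseteq>) ortho {z} P" by (rule orthomodular_cuts[OF fin])
    show "cc_doubly_dense cuts (\<subseteq>) ortho {z} P ((\<lambda>x. L {x}) ` P)"
      by (rule cc_doubly_dense_principal_cuts)
    show "bij_betw (\<lambda>x. L {x}) P ((\<lambda>x. L {x}) ` P)" by (rule bij_betw_principal_cuts)
    show "\<forall>x\<in>P. \<forall>y\<in>P. le x y \<longleftrightarrow> L {x} \<subseteq> L {y}" using lbs_principal_subset_iff by simp
    show "\<forall>x\<in>P. L {c x} = ortho (L {x})" using ortho_principal by simp
  qed (fact lbs_bot, fact lbs_top)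
next
  fix Q :: "'b set" and le c z t X
  assume Q: "finite Q \<and> orthomodular_lattice Q le c z t \<and> cc_doubly_dense Q le c z t X"
  then have "orthomodular_lattice Q le c z t" by simp
  then interpret orthomodular_complemented_lattice Q le c z t
    by (rule orthomodular_complemented_lattice_if_orthomodular_lattice)
  show "finite X \<and> pseudo_orthomodular X le c z t"
    using Q pseudo_orthomodular_dense_subset finite_subset unfolding cc_doubly_dense_def by blast
qed

end
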